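(* Let $K\le L$ be positive integers with $2^K>N$, and consider a nonempty configuration. If $A(G)\ge 2^K$, then the expected number of times a full execution of the inter-level sampler enters the refinement loop is at most $N/(2^K-N)$. If $A(G)\ge 2^L$, this bound improves to $N/(2^L-N)$.
   Context: Fix an integer $b\ge 2$. There is a set $\mathcal L$ of $N$ levels, which are consecutive integers. Each level $\ell$ holds a finite (possibly empty) multiset of normalized significands, each an integer in $[2^{b-1},2^b)$. Let $z$ be the total number of stored significands over all levels; assume $z<2^b$. For each level, $SS_\ell$ is the sum of its significands (so $SS_\ell=0$ iff the level is empty); set $SS_\ell=0$ for integers $\ell\notin\mathcal L$. The level weight is $W_\ell=SS_\ell2^\ell$. For an integer global shift $G$, $A_\ell(G)=\lfloor W_\ell2^G\rfloor+1$ if $SS_\ell>0$ and $A_\ell(G)=0$ if $SS_\ell=0$; $A(G)=\sum_\ell A_\ell(G)$ and $M(G)=\sum_\ell W_\ell2^G$. The configuration is nonempty if $z\ge1$. Inter-level sampler (Algorithm 1), with shift $G$ and $A=A(G)$: it performs independent outer iterations. In an outer iteration, draw $x$ uniformly from $\{1,\dots,A\}$ and scan the levels in decreasing order starting from the largest nonempty level. At the current level $\ell$: if $x<A_\ell(G)$, return $\ell$; if $x=A_\ell(G)$, run the refinement loop for $m=1,2,\dots$: draw $r$ uniformly from $\{0,\dots,2^b-1\}$ independently, let $t=\lfloor SS_\ell 2^{\ell+G+mb}\rfloor \bmod 2^b$; if $r<t$ return $\ell$; else if $r>t$ or $\ell+G+mb\ge 0$, abandon this outer iteration and start a new one; otherwise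 continue with $m+1$. If $x>A_\ell(G)$, set $x\leftarrow x-A_\ell(G)$ and move to the next lower level. *)

theory Defs
  imports "HOL-Probability.Probability"
begin

definition levels :: "int \<Rightarrow> nat \<Rightarrow> int set" where
  "levels lo N = {lo .. lo + int N - 1}"

definition SS :: "int \<Rightarrow> nat \<Rightarrow> (int \<Rightarrow> nat multiset) \<Rightarrow> int \<Rightarrow> nat" where
  "SS lo N S l = (if l \<in> levels lo N then sum_mset (S l) else 0)"

definition W :: "(int \<Rightarrow> nat) \<Rightarrow> int \<Rightarrow> real" where
  "W ss l = real (ss l) * 2 powr real_of_int l"

definition A_lvl :: "(int \<Rightarrow> nat) \<Rightarrow> int \<Rightarrow> int \<Rightarrow> int" where
  "A_lvl ss G l = (if ss l > 0 then \<lfloor>W ss l * 2 powr real_of_int G\<rfloor> + 1 else 0)"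

definition A_tot :: "int \<Rightarrow> nat \<Rightarrow> (int \<Rightarrow> nat) \<Rightarrow> int \<Rightarrow> int" where
  "A_tot lo N ss G = (\<Sum>l\<in>levels lo N. A_lvl ss G l)"

datatype outcome = Ret int | Abandon

partial_function (spmf) refine ::
  "nat \<Rightarrow> (int \<Rightarrow> nat) \<Rightarrow> int \<Rightarrow> int \<Rightarrow> nat \<Rightarrow> outcome spmf" where
  "refine b ss G l m =
     bind_spmf (spmf_of_set {0 ..< (2::int) ^ b}) (\<lambda>r.
       (let t = \<lfloor>real (ss l) * 2 powr real_of_int (l + G + int m * int b)\<rfloor> mod 2 ^ b in
        if r < t then return_spmf (Ret l)
        else if r > t \<or> l + G + int m * int b \<ge> 0 then return_spmf Abandon
        else refine b ss G l (m + 1)))"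

partial_function (spmf) scan ::
  "nat \<Rightarrow> int \<Rightarrow> (int \<Rightarrow> nat) \<Rightarrow> int \<Rightarrow> int \<Rightarrow> int \<Rightarrow> (outcome \<times> nat) spmf" where
  "scan b lo ss G x l =
     (if l < lo then return_pmf None
      else if x < A_lvl ss G l then return_spmf (Ret l, 0)
      else if x = A_lvl ss G l then
        bind_spmf (refine b ss G l 1) (\<lambda>res. return_spmf (res, 1))
      else scan b lo ss G (x - A_lvl ss G l) (l - 1))"

definition outer_iter ::
  "nat \<Rightarrow> int \<Rightarrow> nat \<Rightarrow> (int \<Rightarrow> nat) \<Rightarrow> int \<Rightarrow> (outcome \<times> nat) spmf" where
  "outer_iter b lo N ss G =
     bind_spmf (spmf_of_set {1 .. A_tot lo N ss G}) (\<lambda>x.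
       scan b lo ss G x (Max {l \<in> levels lo N. ss l > 0}))"

partial_function (spmf) sampler ::
  "nat \<Rightarrow> int \<Rightarrow> nat \<Rightarrow> (int \<Rightarrow> nat) \<Rightarrow> int \<Rightarrow> (int \<times> nat) spmf" where
  "sampler b lo N ss G =
     bind_spmf (outer_iter b lo N ss G) (\<lambda>(res, e).
       (case res of
          Ret l \<Rightarrow> return_spmf (l, e)
        | Abandon \<Rightarrow> bind_spmf (sampler b lo N ss G) (\<lambda>(l, c). return_spmf (l, c + e))))"

definition expected_refinements ::
  "nat \<Rightarrow> int \<Rightarrow> nat \<Rightarrow> (int \<Rightarrow> nat) \<Rightarrow> int \<Rightarrow> ennreal" where
  "expected_refinements b lo N ss G =
     (\<integral>\<^sup>+ p. ennreal (real (snd p)) \<partial>measure_spmf (sampler b lo N ss G))"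

end

theory Submission
  imports Defs
begin

text \<open>In one outer iteration the counter \<open>x\<close> is uniform on \<open>{1..A}\<close>, and the scan enters the
  refinement loop only if \<open>x\<close> equals one of the partial sums \<open>A\<^sub>l + \<dots> + A\<^sub>j\<close> taken
  from the top nonempty level \<open>l\<close> downwards; there are at most \<open>N\<close> of them, so an iteration enters
  the loop with probability at most \<open>N/A\<close>, and it can only be abandoned after entering it.
  Hence the expected number \<open>E\<close> of entries satisfies \<open>E \<le> (1 + E) N/A\<close>, i.e. \<open>E \<le> N/(A - N)\<close>.
  Formally this is a fixpoint induction over the recursive sampler, which is sound because
  nonnegative expectations are continuous in the subprobability distribution.
  Finally \<open>A \<ge> 2^K > N\<close> turns \<open>N/(A - N)\<close> into \<open>N/(2^K - N)\<close>.\<close>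

lemma nn_integral_bind_spmf:
  "(\<integral>\<^sup>+ x. f x \<partial>measure_spmf (bind_spmf p g))
     = (\<integral>\<^sup>+ y. (\<integral>\<^sup>+ x. f x \<partial>measure_spmf (g y)) \<partial>measure_spmf p)"
  unfolding measure_spmf_bind
  by (subst nn_integral_bind[where B="count_space UNIV"])
     (auto simp: measurable_count_space_eq1 o_def)

lemma nn_integral_return_spmf: "(\<integral>\<^sup>+ x. f x \<partial>measure_spmf (return_spmf y)) = f y"
  by (simp add: measure_spmf_return_spmf nn_integral_return)

lemma mcont_nn_integral_measure_spmf:
  fixes f :: "'a::countable \<Rightarrow> ennreal"
  shows "mcont lub_spmf (ord_spmf (=)) Sup (\<le>) (\<lambda>p. \<integral>\<^sup>+ x. f x \<partial>measure_spmf p)"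
proof (rule mcontI)
  show "monotone (ord_spmf (=)) (\<le>) (\<lambda>p. \<integral>\<^sup>+ x. f x \<partial>measure_spmf p)"
    by (auto intro!: monotoneI nn_integral_mono mult_right_mono dest: ord_spmf_eq_leD
        simp: nn_integral_measure_spmf)
  show "cont lub_spmf (ord_spmf (=)) Sup (\<le>) (\<lambda>p. \<integral>\<^sup>+ x. f x \<partial>measure_spmf p)"
  proof (rule contI)
    fix Y :: "'a spmf set"
    assume chain: "Complete_Partial_Order.chain (ord_spmf (=)) Y" and "Y \<noteq> {}"
    let ?g = "\<lambda>p x. ennreal (spmf p x) * f x"
    have "Complete_Partial_Order.chain (\<le>) (?g ` Y)"
      using chain by (rule chain_imageI)
        (auto simp: le_fun_def intro!: mult_right_mono dest: ord_spmf_eq_leD)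
    then have "(\<integral>\<^sup>+ x. (SUP p\<in>Y. ?g p x) \<partial>count_space UNIV)
        = (SUP p\<in>Y. \<integral>\<^sup>+ x. ?g p x \<partial>count_space UNIV)"
      using \<open>Y \<noteq> {}\<close> by (intro nn_integral_monotone_convergence_SUP_countable) simp_all
    then show "(\<integral>\<^sup>+ x. f x \<partial>measure_spmf (lub_spmf Y)) = (SUP p\<in>Y. \<integral>\<^sup>+ x. f x \<partial>measure_spmf p)"
      using \<open>Y \<noteq> {}\<close>
      by (simp add: nn_integral_measure_spmf ennreal_spmf_lub_spmf[OF chain] SUP_mult_right_ennreal)
  qed
qed

lemma set_spmf_scan_refinements:
  "(r, e) \<in> set_spmf (scan b lo ss G x l) \<Longrightarrow> e \<le> 1 \<and> (r = Abandon \<longrightarrow> e = 1)"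
proof (induction "nat (l - lo + 1)" arbitrary: x l rule: less_induct)
  case less
  show ?case
  proof (cases "l < lo \<or> x < A_lvl ss G l \<or> x = A_lvl ss G l")
    case True
    with less.prems show ?thesis
      by (subst (asm) scan.simps) (auto simp: set_bind_spmf split: if_splits)
  next
    case False
    then have "(r, e) \<in> set_spmf (scan b lo ss G (x - A_lvl ss G l) (l - 1))"
      using less.prems by (subst (asm) scan.simps) simp
    with less.hyps[of "l - 1"] False show ?thesis
      by fastforce
  qed
qed

definition level_partial_sums :: "(int \<Rightarrow> nat) \<Rightarrow> int \<Rightarrow> int \<Rightarrow> int \<Rightarrow> int set" where
  "level_partial_sums ss G lo l = (\<lambda>j. \<Sum>k\<in>{j..l}. A_lvl ss G k) ` {lo..l}"

lemma card_level_partial_sums_le: "card (level_partial_sums ss G lo l) \<le> nat (l - lo + 1)"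
  unfolding level_partial_sums_def using card_image_le[of "{lo..l}"] by simp

lemma scan_refines_only_at_level_partial_sums:
  assumes "(r, e) \<in> set_spmf (scan b lo ss G x l)" and "e \<noteq> 0"
  shows "x \<in> level_partial_sums ss G lo l"
  using assms unfolding level_partial_sums_def
proof (induction "nat (l - lo + 1)" arbitrary: x l rule: less_induct)
  case less
  show ?case
  proof (cases "l < lo \<or> x < A_lvl ss G l \<or> x = A_lvl ss G l")
    case True
    with less.prems show ?thesis
      by (subst (asm) scan.simps) (auto simp: set_bind_spmf split: if_splits intro!: image_eqI[of _ _ l])
  next
    case False
    then have "(r, e) \<in> set_spmf (scan b lo ss G (x - A_lvl ss G l) (l - 1))"
      using less.prems(1) by (subst (asm) scan.simps) simp
    with less.hyps[of "l - 1"] less.prems(2) False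
    obtain j where j: "j \<in> {lo..l - 1}" "x - A_lvl ss G l = (\<Sum>k\<in>{j..l - 1}. A_lvl ss G k)"
      by fastforce
    have "{j..l} = insert l {j..l - 1}"
      using j(1) by auto
    then have "x = (\<Sum>k\<in>{j..l}. A_lvl ss G k)"
      using j(2) by simp
    with j(1) show ?thesis by auto
  qed
qed

lemma nn_integral_scan_refinements_le_indicator:
  "(\<integral>\<^sup>+ p. ennreal (real (snd p)) \<partial>measure_spmf (scan b lo ss G x l))
     \<le> indicator (level_partial_sums ss G lo l) x"
  (is "?E \<le> indicator ?P x")
proof (cases "x \<in> ?P")
  case True
  have "?E \<le> (\<integral>\<^sup>+ p. 1 \<partial>measure_spmf (scan b lo ss G x l))"
    using set_spmf_scan_refinements
    by (intro nn_integral_mono_AE) fastforce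
  also have "\<dots> \<le> 1"
    by (simp add: measure_spmf.emeasure_space_le_1)
  finally show ?thesis
    using True by simp
next
  case False
  then have "?E = (\<integral>\<^sup>+ p. 0 \<partial>measure_spmf (scan b lo ss G x l))"
    using scan_refines_only_at_level_partial_sums
    by (intro nn_integral_cong_AE) fastforce
  then show ?thesis
    by simp
qed

lemma nn_integral_outer_iter_refinements_le:
  assumes nonempty: "{l \<in> levels lo N. ss l > 0} \<noteq> {}" and A_pos: "0 < A_tot lo N ss G"
  shows "(\<integral>\<^sup>+ p. ennreal (real (snd p)) \<partial>measure_spmf (outer_iter b lo N ss G))
           \<le> ennreal (real N / real_of_int (A_tot lo N ss G))"
proof -
  define A where "A = A_tot lo N ss G"
  define lmax where "lmax = Max {l \<in> levels lo N. ss l > 0}"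
  define P where "P = level_partial_sums ss G lo lmax"
  have "finite {l \<in> levels lo N. ss l > 0}"
    by (rule finite_subset[of _ "levels lo N"]) (auto simp: levels_def)
  then have "lmax \<in> levels lo N"
    using Max_in nonempty unfolding lmax_def by blast
  then have "card P \<le> N"
    using card_level_partial_sums_le[of ss G lo lmax] unfolding P_def levels_def by fastforce
  have "(\<integral>\<^sup>+ p. ennreal (real (snd p)) \<partial>measure_spmf (outer_iter b lo N ss G))
      = (\<Sum>x\<in>{1..A}. \<integral>\<^sup>+ p. ennreal (real (snd p)) \<partial>measure_spmf (scan b lo ss G x lmax))
          / of_nat (card {1..A})"
    by (simp add: outer_iter_def nn_integral_bind_spmf nn_integral_spmf_of_set A_def lmax_def)
  also have "\<dots> \<le> (\<Sum>x\<in>{1..A}. indicator P x) / of_nat (card {1..A})"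
    unfolding P_def by (intro divide_right_mono_ennreal sum_mono nn_integral_scan_refinements_le_indicator)
  also have "\<dots> = of_nat (card ({1..A} \<inter> P)) / of_nat (card {1..A})"
    by (simp add: indicator_def)
  also have "\<dots> \<le> of_nat N / of_nat (card {1..A})"
    using card_mono[OF _ Int_lower2, of P "{1..A}"] \<open>card P \<le> N\<close>
    by (intro divide_right_mono_ennreal) (simp add: P_def level_partial_sums_def)
  also have "\<dots> = ennreal (real N / real_of_int A)"
    using A_pos by (simp add: A_def ennreal_of_nat_eq_real_of_nat divide_ennreal)
  finally show ?thesis
    unfolding A_def .
qed

lemma nn_integral_sampler_step_le:
  fixes g :: "(int \<times> nat) spmf" and ss :: "int \<Rightarrow> nat" and lo G :: int and N :: nat
  defines "c \<equiv> real N / (real_of_int (A_tot lo N ss G) - real N)"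
  assumes nonempty: "{l \<in> levels lo N. ss l > 0} \<noteq> {}" and A_gt: "int N < A_tot lo N ss G"
    and g: "(\<integral>\<^sup>+ p. ennreal (real (snd p)) \<partial>measure_spmf g) \<le> ennreal c"
  shows "(\<integral>\<^sup>+ p. ennreal (real (snd p)) \<partial>measure_spmf
           (bind_spmf (outer_iter b lo N ss G) (\<lambda>(res, e).
              (case res of
                 Ret l \<Rightarrow> return_spmf (l, e)
               | Abandon \<Rightarrow> bind_spmf g (\<lambda>(l, n). return_spmf (l, n + e))))))
         \<le> ennreal c"
    (is "(\<integral>\<^sup>+ p. ?cnt p \<partial>measure_spmf (bind_spmf ?outer ?cont)) \<le> _")
proof -
  \<comment> \<open>\<open>c\<close> is the fixed point of \<open>c \<mapsto> (1 + c) N/A\<close>.\<close>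
  have "c \<ge> 0"
    using A_gt by (simp add: c_def)
  have pointwise: "(\<integral>\<^sup>+ p. ?cnt p \<partial>measure_spmf (?cont (r, e))) \<le> ennreal (1 + c) * ennreal (real e)"
    if "(r, e) \<in> set_spmf ?outer" for r e
  proof -
    have e: "e \<le> 1 \<and> (r = Abandon \<longrightarrow> e = 1)"
      using that set_spmf_scan_refinements by (fastforce simp: outer_iter_def set_bind_spmf)
    show ?thesis
    proof (cases r)
      case (Ret l)
      then show ?thesis
        using \<open>c \<ge> 0\<close> by (simp add: nn_integral_return_spmf distrib_right)
    next
      case Abandon
      have "(\<integral>\<^sup>+ p. ?cnt p \<partial>measure_spmf (?cont (r, e)))
          = (\<integral>\<^sup>+ p. ennreal (real (snd p)) + 1 \<partial>measure_spmf g)"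
        using Abandon e
        by (simp add: nn_integral_bind_spmf nn_integral_return_spmf split_beta ennreal_plus add.commute)
      also have "\<dots> = (\<integral>\<^sup>+ p. ennreal (real (snd p)) \<partial>measure_spmf g) + (\<integral>\<^sup>+ p. 1 \<partial>measure_spmf g)"
        by (rule nn_integral_add) simp_all
      also have "\<dots> \<le> ennreal c + 1"
        using g by (intro add_mono) (simp_all add: measure_spmf.emeasure_space_le_1)
      finally show ?thesis
        using Abandon e \<open>c \<ge> 0\<close> by (simp add: ennreal_plus add.commute)
    qed
  qed
  have "(\<integral>\<^sup>+ p. ?cnt p \<partial>measure_spmf (bind_spmf ?outer ?cont))
      = (\<integral>\<^sup>+ q. (\<integral>\<^sup>+ p. ?cnt p \<partial>measure_spmf (?cont q)) \<partial>measure_spmf ?outer)"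
    by (rule nn_integral_bind_spmf)
  also have "\<dots> \<le> (\<integral>\<^sup>+ q. ennreal (1 + c) * ennreal (real (snd q)) \<partial>measure_spmf ?outer)"
    using pointwise by (intro nn_integral_mono_AE) auto
  also have "\<dots> = ennreal (1 + c) * (\<integral>\<^sup>+ q. ennreal (real (snd q)) \<partial>measure_spmf ?outer)"
    by (rule nn_integral_cmult) simp
  also have "\<dots> \<le> ennreal (1 + c) * ennreal (real N / real_of_int (A_tot lo N ss G))"
    using A_gt by (intro mult_left_mono nn_integral_outer_iter_refinements_le[OF nonempty]) simp_all
  also have "\<dots> = ennreal c"
    using A_gt \<open>c \<ge> 0\<close> by (simp add: c_def ennreal_mult[symmetric] field_simps)
  finally show ?thesis .
qed

lemma expected_refinements_le:
  assumes nonempty: "{l \<in> levels lo N. ss l > 0} \<noteq> {}" and A_gt: "int N < A_tot lo N ss G"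
  shows "expected_refinements b lo N ss G
           \<le> ennreal (real N / (real_of_int (A_tot lo N ss G) - real N))"
  unfolding expected_refinements_def
proof (rule sampler.fixp_induct[where P="\<lambda>s. (\<integral>\<^sup>+ p. ennreal (real (snd p)) \<partial>measure_spmf (s b lo N ss G))
                                   \<le> ennreal (real N / (real_of_int (A_tot lo N ss G) - real N))"],
       goal_cases)
  case 1
  show ?case
    by (simp only: curry_def)
       (intro ccpo_class.admissible_leI mcont2mcont[OF mcont_nn_integral_measure_spmf] mcont_call mcont_const)
next
  case 2
  show ?case
    by simp
next
  case (3 s)
  then show ?case
    by (rule nn_integral_sampler_step_le[OF nonempty A_gt])
qed

lemma expected_refinements_le_of_A_tot_ge:
  fixes M :: real
  assumes nonempty: "{l \<in> levels lo N. ss l > 0} \<noteq> {}"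
    and "real N < M" and "M \<le> real_of_int (A_tot lo N ss G)"
  shows "expected_refinements b lo N ss G \<le> ennreal (real N / (M - real N))"
proof -
  have "int N < A_tot lo N ss G"
    using assms(2,3) by linarith
  with nonempty have "expected_refinements b lo N ss G
      \<le> ennreal (real N / (real_of_int (A_tot lo N ss G) - real N))"
    by (rule expected_refinements_le)
  also have "\<dots> \<le> ennreal (real N / (M - real N))"
    using assms(2,3) by (intro ennreal_leI divide_left_mono) auto
  finally show ?thesis .
qed

lemma levels_SS_pos_nonempty:
  assumes pos: "\<And>l s. l \<in> levels lo N \<Longrightarrow> s \<in># S l \<Longrightarrow> 0 < s"
    and "(\<Sum>l\<in>levels lo N. size (S l)) \<ge> 1"
  shows "{l \<in> levels lo N. SS lo N S l > 0} \<noteq> {}"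
proof -
  have "\<exists>l\<in>levels lo N. S l \<noteq> {#}"
  proof (rule ccontr)
    assume "\<not> ?thesis"
    then have "(\<Sum>l\<in>levels lo N. size (S l)) = 0"
      by simp
    with assms(2) show False
      by simp
  qed
  then obtain l where l: "l \<in> levels lo N" "S l \<noteq> {#}" ..
  then obtain s where s: "s \<in># S l"
    by (meson multiset_nonemptyE)
  have "s \<le> sum_mset (S l)"
    using sum_mset.remove[OF s] by simp
  then have "SS lo N S l > 0"
    using pos[OF l(1) s] l(1) by (simp add: SS_def)
  with l(1) show ?thesis
    by blast
qed

theorem mainTheorem7:
  fixes b N K L :: nat and lo G :: int and S :: "int \<Rightarrow> nat multiset"
  assumes hb: "b \<ge> 2"
    and hsig: "\<And>l s. l \<in> levels lo N \<Longrightarrow> s \<in># S l \<Longrightarrow> 2 ^ (b - 1) \<le> s \<and> s < 2 ^ b"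
    and hz: "(\<Sum>l\<in>levels lo N. size (S l)) < 2 ^ b"
    and hnonempty: "(\<Sum>l\<in>levels lo N. size (S l)) \<ge> 1"
    and hK: "0 < K" and hKL: "K \<le> L"
    and hKN: "2 ^ K > N"
  shows "(A_tot lo N (SS lo N S) G \<ge> 2 ^ K \<longrightarrow>
            expected_refinements b lo N (SS lo N S) G
              \<le> ennreal (real N / (2 ^ K - real N)))
       \<and> (A_tot lo N (SS lo N S) G \<ge> 2 ^ L \<longrightarrow>
            expected_refinements b lo N (SS lo N S) G
              \<le> ennreal (real N / (2 ^ L - real N)))"
proof -
  have "{l \<in> levels lo N. SS lo N S l > 0} \<noteq> {}"
    by (rule levels_SS_pos_nonempty[OF _ hnonempty])
       (metis hsig less_le_trans zero_less_numeral zero_less_power)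
  then have bound: "expected_refinements b lo N (SS lo N S) G \<le> ennreal (real N / (2 ^ M - real N))"
    if "2 ^ M > N" and "A_tot lo N (SS lo N S) G \<ge> 2 ^ M" for M :: nat
  proof (rule expected_refinements_le_of_A_tot_ge)
    show "real N < 2 ^ M"
      using that(1) by (metis of_nat_less_iff of_nat_numeral of_nat_power)
    show "2 ^ M \<le> real_of_int (A_tot lo N (SS lo N S) G)"
      using that(2) by (metis of_int_le_iff of_int_numeral of_int_power)
  qed
  have "2 ^ L > N"
    using hKN power_increasing[OF hKL, of "2::nat"] by linarith
  with hKN show ?thesis
    by (auto intro: bound)
qed

end
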